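(* Let $P,PA$ be labelings and $c$ a command with $P;PA\vdash_{\mathtt{true}}c$, and let $\rho_1\sim_P\rho_2$, $\mu_1\sim_{PA}\mu_2$. If $\langle c,\rho_1,\mu_1\rangle\approx\langle c,\rho_2,\mu_2\rangle$, then $\langle c,\rho_1,\mu_1,\mathtt{false}\rangle\approx_i\langle c,\rho_2,\mu_2,\mathtt{false}\rangle$, i.e., for every directive list $D$ and observation lists $O_1,O_2$, if $\langle c,\rho_k,\mu_k,\mathtt{false}\rangle\xrightarrow[D]{O_k}{}_i^*$ some configuration for $k=1,2$ (ideal semantics w.r.t. $P$), then $O_1=O_2$.
   Context: Language AWhile: scalar variables $X\in\mathcal V$, arrays $a\in\mathcal A$; $e::=n\mid X\mid\mathrm{op}_{\mathbb N}(e,\dots,e)\mid be\,?\,e_1:e_2$; $be::=\mathtt{true}\mid\mathtt{false}\mid\mathrm{cmp}(e,e)\mid\mathrm{op}_{\mathbb B}(be,\dots,be)$; $c::=\mathtt{skip}\mid X:=e\mid c_1;c_2\mid\mathtt{if}\ be\ \mathtt{then}\ c_1\ \mathtt{else}\ c_2\mid\mathtt{while}\ be\ \mathtt{do}\ c\mid X\leftarrow a[e]\mid a[e]\leftarrow e'$. Scalar state $\rho:\mathcal V\to\mathbb N$; array state $\mu$ with sizes $|a|_\mu$ and values $\mu(a)[i]$; $[\![\cdot]\!]_\rho$ pure evaluation. Sequential semantics: steps $\langle c,\rho,\mu\rangle\xrightarrow{o}\langle c',\rho',\mu'\rangle$ with optional observation: $X:=e\to\mathtt{skip}$ updating $X$;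 $c_1;c_2\xrightarrow{o}c_1';c_2$ if $c_1\xrightarrow{o}c_1'$; $\mathtt{skip};c\to c$; conditional goes to branch $v=[\![be]\!]_\rho$ observing $\mathrm{branch}(v)$; $\mathtt{while}\ be\ \mathtt{do}\ c\to\mathtt{if}\ be\ \mathtt{then}\ (c;\mathtt{while}\ be\ \mathtt{do}\ c)\ \mathtt{else}\ \mathtt{skip}$; $X\leftarrow a[ie]$ with $i=[\![ie]\!]_\rho<|a|_\mu$ sets $X:=\mu(a)[i]$ observing $\mathrm{read}(a,i)$; $a[ie]\leftarrow e$ with $i<|a|_\mu$ sets $\mu[a[i]\mapsto[\![e]\!]_\rho]$ observing $\mathrm{write}(a,i)$. $\langle c_1,\rho_1,\mu_1\rangle\approx\langle c_2,\rho_2,\mu_2\rangle$ iff for all multi-step executions $\langle c_k,\rho_k,\mu_k\rangle\xrightarrow{O_k}{}^*$ (any prefix), one of $O_1,O_2$ is a prefix of the other. Labels: $\mathtt{true}$=public, $\mathtt{false}$=secret; $\ell_1\sqsubseteq\ell_2$ iff $\ell_2=\mathtt{true}\Rightarrow\ell_1=\mathtt{true}$; $\ell_1\sqcup\ell_2=\ell_1\wedge\ell_2$. $P(e),P(be)$ public iff all variables occurring are public. $\rho_1\sim_P\rho_2$ iff agreement on public scalar variables; $\mu_1\sim_{PA}\mu_2$ iff agreement on sizes and contents of public arrays. IFC typing $P;PA\vdash_{pc}c$: $\mathtt{skip}$; $X:=e$ if $pc\sqcup P(e)\sqsubseteq P(X)$; $c_1;c_2$ if both typed under $pc$; $\mathtt{if}$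 if both branches typed under $pc\sqcup P(be)$; $\mathtt{while}$ if body typed under $pc\sqcup P(be)$; $X\leftarrow a[i]$ if $pc\sqcup P(i)\sqcup PA(a)\sqsubseteq P(X)$; $a[i]\leftarrow e$ if $pc\sqcup P(i)\sqcup P(e)\sqsubseteq PA(a)$. Ideal semantics w.r.t. $P$: configurations $\langle c,\rho,\mu,\beta\rangle$; steps with optional observation and optional directive $d\in\{\mathit{step},\mathit{force},\mathrm{load}(a',j),\mathrm{store}(a',j)\}$. Non-observing rules as sequentially (flag kept, no directive). Conditional: $v=(P(be)\vee\neg\beta)\wedge[\![be]\!]_\rho$; $\mathit{step}$ goes to branch $v$; $\mathit{force}$ goes to branch $\neg v$ and sets $\beta:=\mathtt{true}$; obs $\mathrm{branch}(v)$. Read $X\leftarrow a[ie]$ with $\mathit{step}$: $i=0$ if $(P(ie)=\mathtt{false}\vee P(X)=\mathtt{true})\wedge\beta$, else $[\![ie]\!]_\rho$; requires $i<|a|_\mu$; $X:=\mu(a)[i]$; obs $\mathrm{read}(a,i)$. Read with $\mathrm{load}(a',j)$: requires $\beta=\mathtt{true}$, $P(ie)=\mathtt{true}$, $P(X)=\mathtt{false}$, $i=[\![ie]\!]_\rho\ge|a|_\mu$, $j<|a'|_\mu$; $X:=\mu(a')[j]$; obs $\mathrm{read}(a,i)$. Write $a[ie]\leftarrow ae$ with $\mathit{step}$: $i=0$ if $(P(ie)=\mathtt{false}\vee P(ae)=\mathtt{false})\wedge\beta$, else $[\![ie]\!]_\rho$; requires $i<|a|_\mu$; $\mu[a[i]\mapsto[\![ae]\!]_\rho]$;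 obs $\mathrm{write}(a,i)$. Write with $\mathrm{store}(a',j)$: requires $\beta=\mathtt{true}$, $P(ie)=P(ae)=\mathtt{true}$, $i\ge|a|_\mu$, $j<|a'|_\mu$; $\mu[a'[j]\mapsto[\![ae]\!]_\rho]$; obs $\mathrm{write}(a,i)$. Multi-step $\xrightarrow[D]{O}{}_i^*$ collects directives and observations. *)

theory Defs
  imports Main "HOL-Library.Sublist"
begin

type_synonym vname = string
type_synonym aname = string
type_synonym state = "vname \<Rightarrow> nat"
type_synonym astate = "aname \<Rightarrow> nat list"
type_synonym label = bool  \<comment> \<open>True = public, False = secret\<close>

datatype aexp = Num nat | V vname | Op "nat list \<Rightarrow> nat" "aexp list" | Ite bexp aexp aexp
and bexp = Tru | Fls | Cmp "nat \<Rightarrow> nat \<Rightarrow> bool" aexp aexp | BOp "bool list \<Rightarrow> bool" "bexp list"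

datatype com = SKIP | Assign vname aexp | Seq com com | If bexp com com | While bexp com
  | ARead vname aname aexp | AWrite aname aexp aexp

primrec aval :: "aexp \<Rightarrow> state \<Rightarrow> nat" and bval :: "bexp \<Rightarrow> state \<Rightarrow> bool" where
  "aval (Num n) s = n"
| "aval (V x) s = s x"
| "aval (Op f es) s = f (map (\<lambda>e. aval e s) es)"
| "aval (Ite b e1 e2) s = (if bval b s then aval e1 s else aval e2 s)"
| "bval Tru s = True"
| "bval Fls s = False"
| "bval (Cmp f e1 e2) s = f (aval e1 s) (aval e2 s)"
| "bval (BOp f bs) s = f (map (\<lambda>b. bval b s) bs)"

primrec avars :: "aexp \<Rightarrow> vname set" and bvars :: "bexp \<Rightarrow> vname set" where
  "avars (Num n) = {}"
| "avars (V x) = {x}"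
| "avars (Op f es) = \<Union> (set (map avars es))"
| "avars (Ite b e1 e2) = bvars b \<union> avars e1 \<union> avars e2"
| "bvars Tru = {}"
| "bvars Fls = {}"
| "bvars (Cmp f e1 e2) = avars e1 \<union> avars e2"
| "bvars (BOp f bs) = \<Union> (set (map bvars bs))"

definition Pa :: "(vname \<Rightarrow> label) \<Rightarrow> aexp \<Rightarrow> label" where
  "Pa P e = (\<forall>x\<in>avars e. P x)"
definition Pb :: "(vname \<Rightarrow> label) \<Rightarrow> bexp \<Rightarrow> label" where
  "Pb P b = (\<forall>x\<in>bvars b. P x)"

definition lle :: "label \<Rightarrow> label \<Rightarrow> bool" where
  "lle l1 l2 = (l2 \<longrightarrow> l1)"
definition ljoin :: "label \<Rightarrow> label \<Rightarrow> label" where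
  "ljoin l1 l2 = (l1 \<and> l2)"

definition sim_P :: "(vname \<Rightarrow> label) \<Rightarrow> state \<Rightarrow> state \<Rightarrow> bool" where
  "sim_P P r1 r2 = (\<forall>x. P x \<longrightarrow> r1 x = r2 x)"
definition sim_PA :: "(aname \<Rightarrow> label) \<Rightarrow> astate \<Rightarrow> astate \<Rightarrow> bool" where
  "sim_PA PA m1 m2 = (\<forall>a. PA a \<longrightarrow> m1 a = m2 a)"

datatype obs = OBranch bool | ORead aname nat | OWrite aname nat
datatype dir = DStep | DForce | DLoad aname nat | DStore aname nat

definition olist :: "'a option \<Rightarrow> 'a list" where
  "olist o' = (case o' of None \<Rightarrow> [] | Some x \<Rightarrow> [x])"

inductive sstep :: "com \<Rightarrow> state \<Rightarrow> astate \<Rightarrow> obs option \<Rightarrow> com \<Rightarrow> state \<Rightarrow> astate \<Rightarrow> bool" where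
  sAssign: "sstep (Assign x e) r m None SKIP (r(x := aval e r)) m"
| sSeq: "sstep c1 r m o' c1' r' m' \<Longrightarrow> sstep (Seq c1 c2) r m o' (Seq c1' c2) r' m'"
| sSkip: "sstep (Seq SKIP c) r m None c r m"
| sIf: "v = bval b r \<Longrightarrow> sstep (If b c1 c2) r m (Some (OBranch v)) (if v then c1 else c2) r m"
| sWhile: "sstep (While b c) r m None (If b (Seq c (While b c)) SKIP) r m"
| sRead: "i = aval ie r \<Longrightarrow> i < length (m a) \<Longrightarrow>
    sstep (ARead x a ie) r m (Some (ORead a i)) SKIP (r(x := m a ! i)) m"
| sWrite: "i = aval ie r \<Longrightarrow> i < length (m a) \<Longrightarrow>
    sstep (AWrite a ie e) r m (Some (OWrite a i)) SKIP r (m(a := (m a)[i := aval e r]))"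

inductive ssteps :: "com \<Rightarrow> state \<Rightarrow> astate \<Rightarrow> obs list \<Rightarrow> com \<Rightarrow> state \<Rightarrow> astate \<Rightarrow> bool" where
  ssRefl: "ssteps c r m [] c r m"
| ssStep: "sstep c r m o' c' r' m' \<Longrightarrow> ssteps c' r' m' Os c'' r'' m'' \<Longrightarrow>
    ssteps c r m (olist o' @ Os) c'' r'' m''"

definition seq_equiv :: "com \<Rightarrow> state \<Rightarrow> astate \<Rightarrow> com \<Rightarrow> state \<Rightarrow> astate \<Rightarrow> bool" where
  "seq_equiv c1 r1 m1 c2 r2 m2 = (\<forall>O1 O2 c1' r1' m1' c2' r2' m2'.
     ssteps c1 r1 m1 O1 c1' r1' m1' \<longrightarrow> ssteps c2 r2 m2 O2 c2' r2' m2' \<longrightarrow>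
     prefix O1 O2 \<or> prefix O2 O1)"

inductive typed :: "(vname \<Rightarrow> label) \<Rightarrow> (aname \<Rightarrow> label) \<Rightarrow> label \<Rightarrow> com \<Rightarrow> bool" where
  tSkip: "typed P PA pc SKIP"
| tAssign: "lle (ljoin pc (Pa P e)) (P x) \<Longrightarrow> typed P PA pc (Assign x e)"
| tSeq: "typed P PA pc c1 \<Longrightarrow> typed P PA pc c2 \<Longrightarrow> typed P PA pc (Seq c1 c2)"
| tIf: "typed P PA (ljoin pc (Pb P b)) c1 \<Longrightarrow> typed P PA (ljoin pc (Pb P b)) c2 \<Longrightarrow>
    typed P PA pc (If b c1 c2)"
| tWhile: "typed P PA (ljoin pc (Pb P b)) c \<Longrightarrow> typed P PA pc (While b c)"
| tRead: "lle (ljoin (ljoin pc (Pa P i)) (PA a)) (P x) \<Longrightarrow> typed P PA pc (ARead x a i)"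
| tWrite: "lle (ljoin (ljoin pc (Pa P i)) (Pa P e)) (PA a) \<Longrightarrow> typed P PA pc (AWrite a i e)"

inductive istep :: "(vname \<Rightarrow> label) \<Rightarrow> com \<Rightarrow> state \<Rightarrow> astate \<Rightarrow> bool \<Rightarrow> obs option \<Rightarrow> dir option
    \<Rightarrow> com \<Rightarrow> state \<Rightarrow> astate \<Rightarrow> bool \<Rightarrow> bool" where
  iAssign: "istep P (Assign x e) r m \<beta> None None SKIP (r(x := aval e r)) m \<beta>"
| iSeq: "istep P c1 r m \<beta> o' d c1' r' m' \<beta>' \<Longrightarrow> istep P (Seq c1 c2) r m \<beta> o' d (Seq c1' c2) r' m' \<beta>'"
| iSkip: "istep P (Seq SKIP c) r m \<beta> None None c r m \<beta>"
| iWhile: "istep P (While b c) r m \<beta> None None (If b (Seq c (While b c)) SKIP) r m \<beta>"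
| iIfStep: "v = ((Pb P b \<or> \<not> \<beta>) \<and> bval b r) \<Longrightarrow>
    istep P (If b c1 c2) r m \<beta> (Some (OBranch v)) (Some DStep) (if v then c1 else c2) r m \<beta>"
| iIfForce: "v = ((Pb P b \<or> \<not> \<beta>) \<and> bval b r) \<Longrightarrow>
    istep P (If b c1 c2) r m \<beta> (Some (OBranch v)) (Some DForce) (if \<not> v then c1 else c2) r m True"
| iReadStep: "i = (if (\<not> Pa P ie \<or> P x) \<and> \<beta> then 0 else aval ie r) \<Longrightarrow> i < length (m a) \<Longrightarrow>
    istep P (ARead x a ie) r m \<beta> (Some (ORead a i)) (Some DStep) SKIP (r(x := m a ! i)) m \<beta>"
| iReadLoad: "\<beta> \<Longrightarrow> Pa P ie \<Longrightarrow> \<not> P x \<Longrightarrow> i = aval ie r \<Longrightarrow> i \<ge> length (m a) \<Longrightarrow> j < length (m a') \<Longrightarrow>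
    istep P (ARead x a ie) r m \<beta> (Some (ORead a i)) (Some (DLoad a' j)) SKIP (r(x := m a' ! j)) m \<beta>"
| iWriteStep: "i = (if (\<not> Pa P ie \<or> \<not> Pa P e) \<and> \<beta> then 0 else aval ie r) \<Longrightarrow> i < length (m a) \<Longrightarrow>
    istep P (AWrite a ie e) r m \<beta> (Some (OWrite a i)) (Some DStep) SKIP r (m(a := (m a)[i := aval e r])) \<beta>"
| iWriteStore: "\<beta> \<Longrightarrow> Pa P ie \<Longrightarrow> Pa P e \<Longrightarrow> i = aval ie r \<Longrightarrow> i \<ge> length (m a) \<Longrightarrow> j < length (m a') \<Longrightarrow>
    istep P (AWrite a ie e) r m \<beta> (Some (OWrite a i)) (Some (DStore a' j)) SKIP r (m(a' := (m a')[j := aval e r])) \<beta>"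

inductive isteps :: "(vname \<Rightarrow> label) \<Rightarrow> com \<Rightarrow> state \<Rightarrow> astate \<Rightarrow> bool \<Rightarrow> dir list \<Rightarrow> obs list
    \<Rightarrow> com \<Rightarrow> state \<Rightarrow> astate \<Rightarrow> bool \<Rightarrow> bool" where
  isRefl: "isteps P c r m \<beta> [] [] c r m \<beta>"
| isStep: "istep P c r m \<beta> o' d c' r' m' \<beta>' \<Longrightarrow> isteps P c' r' m' \<beta>' D Os c'' r'' m'' \<beta>'' \<Longrightarrow>
    isteps P c r m \<beta> (olist d @ D) (olist o' @ Os) c'' r'' m'' \<beta>''"

definition ideal_equiv :: "(vname \<Rightarrow> label) \<Rightarrow> com \<Rightarrow> state \<Rightarrow> astate \<Rightarrow> bool \<Rightarrow> com \<Rightarrow> state \<Rightarrow> astate \<Rightarrow> bool \<Rightarrow> bool" where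
  "ideal_equiv P c1 r1 m1 b1 c2 r2 m2 b2 = (\<forall>D O1 O2 c1' r1' m1' b1' c2' r2' m2' b2'.
     isteps P c1 r1 m1 b1 D O1 c1' r1' m1' b1' \<longrightarrow> isteps P c2 r2 m2 b2 D O2 c2' r2' m2' b2' \<longrightarrow>
     O1 = O2)"

end

theory Submission
  imports Defs
begin

(* Run the two ideal executions in lockstep on the common directive list, keeping as invariant:
   the same command and speculation flag, low-equivalent states, a command typable at pc = true,
   and, as long as the flag is unset, sequential equivalence of the two configurations.
   With the flag unset an ideal step is a sequential step (or, under DForce, has the same
   observation as one), so sequential equivalence forces equal observations and is inherited by
   the successors. Once the flag is set, the ideal semantics makes every branch outcome and
   address depend on public data only, and typing keeps the public data of the two runs equal. *)

lemma aval_bval_cong: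
  "(\<forall>x\<in>avars e. r1 x = r2 x) \<Longrightarrow> aval e r1 = aval e r2"
  "(\<forall>x\<in>bvars b. r1 x = r2 x) \<Longrightarrow> bval b r1 = bval b r2"
proof (induction e and b)
  case (Op f es)
  then have "map (\<lambda>e. aval e r1) es = map (\<lambda>e. aval e r2) es" by fastforce
  then show ?case by (simp only: aval.simps)
next
  case (BOp f bs)
  then have "map (\<lambda>b. bval b r1) bs = map (\<lambda>b. bval b r2) bs" by fastforce
  then show ?case by (simp only: bval.simps)
qed auto

lemma aval_public: "Pa P e \<Longrightarrow> sim_P P r1 r2 \<Longrightarrow> aval e r1 = aval e r2"
  by (rule aval_bval_cong(1)) (auto simp: Pa_def sim_P_def)

lemma bval_public: "Pb P b \<Longrightarrow> sim_P P r1 r2 \<Longrightarrow> bval b r1 = bval b r2"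
  by (rule aval_bval_cong(2)) (auto simp: Pb_def sim_P_def)

lemma typed_lower_pc: "typed P PA pc c \<Longrightarrow> lle pc' pc \<Longrightarrow> typed P PA pc' c"
proof (induction arbitrary: pc' rule: typed.induct)
  case (tIf pc b c1 c2)
  then show ?case by (intro typed.tIf) (auto simp: lle_def ljoin_def)
next
  case (tWhile pc b c)
  then show ?case by (intro typed.tWhile) (auto simp: lle_def ljoin_def)
qed (auto simp: lle_def ljoin_def intro: typed.intros)

fun silent :: "com \<Rightarrow> bool" where
  "silent (Assign x e) = True"
| "silent (Seq c1 c2) = (c1 = SKIP \<or> silent c1)"
| "silent (While b c) = True"
| "silent _ = False"

lemma istep_not_SKIP: "istep P c r m b ob d c' r' m' b' \<Longrightarrow> c \<noteq> SKIP"
  by (auto elim: istep.cases)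

lemma istep_dir_None_iff_silent: "istep P c r m b ob d c' r' m' b' \<Longrightarrow> d = None \<longleftrightarrow> silent c"
  by (induction rule: istep.induct) (auto dest: istep_not_SKIP)

lemma istep_obs_None_iff_dir_None: "istep P c r m b ob d c' r' m' b' \<Longrightarrow> ob = None \<longleftrightarrow> d = None"
  by (induction rule: istep.induct) auto

lemma isteps_length_eq: "isteps P c r m b D Os c' r' m' b' \<Longrightarrow> length Os = length D"
  by (induction rule: isteps.induct)
    (auto simp: olist_def dest!: istep_obs_None_iff_dir_None split: option.splits)

lemma istep_flag: "istep P c r m b ob d c' r' m' b' \<Longrightarrow> b' \<longleftrightarrow> b \<or> d = Some DForce"
  by (induction rule: istep.induct) auto

lemma istep_unflagged_sstep:
  "istep P c r m False ob d c' r' m' False \<Longrightarrow> sstep c r m ob c' r' m'"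
  by (induction P c r m "False" ob d c' r' m' "False" rule: istep.induct)
    (auto intro: sstep.intros sIf[of True, simplified] sIf[of False, simplified])

lemma istep_unflagged_sstep_ex:
  "istep P c r m False ob d c' r' m' b' \<Longrightarrow> \<exists>c'' r'' m''. sstep c r m ob c'' r'' m''"
  by (induction P c r m "False" ob d c' r' m' b' rule: istep.induct)
    (auto intro: sstep.intros sIf[of True, simplified] sIf[of False, simplified])

lemma seq_equiv_sstep:
  assumes "seq_equiv c r1 m1 c r2 m2"
    and "sstep c r1 m1 ob c' r1' m1'" and "sstep c r2 m2 ob c' r2' m2'"
  shows "seq_equiv c' r1' m1' c' r2' m2'"
  unfolding seq_equiv_def
proof (intro allI impI)
  fix O1 O2 c1'' r1'' m1'' c2'' r2'' m2''
  assume "ssteps c' r1' m1' O1 c1'' r1'' m1''" and "ssteps c' r2' m2' O2 c2'' r2'' m2''"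
  with assms have "prefix (olist ob @ O1) (olist ob @ O2) \<or> prefix (olist ob @ O2) (olist ob @ O1)"
    unfolding seq_equiv_def by (blast intro: ssStep)
  then show "prefix O1 O2 \<or> prefix O2 O1" by simp
qed

lemma seq_equiv_first_obs:
  assumes "seq_equiv c r1 m1 c r2 m2"
    and "sstep c r1 m1 ob1 c1' r1' m1'" and "sstep c r2 m2 ob2 c2' r2' m2'"
    and "ob1 = None \<longleftrightarrow> ob2 = None"
  shows "ob1 = ob2"
proof -
  have "prefix (olist ob1) (olist ob2) \<or> prefix (olist ob2) (olist ob1)"
    using assms(1) ssStep[OF assms(2) ssRefl] ssStep[OF assms(3) ssRefl]
    unfolding seq_equiv_def by fastforce
  with assms(4) show ?thesis by (cases ob1; cases ob2) (auto simp: olist_def)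
qed

inductive_cases typed_SeqE: "typed P PA pc (Seq c1 c2)"
inductive_cases typed_IfE: "typed P PA pc (If b c1 c2)"
inductive_cases typed_WhileE: "typed P PA pc (While b c)"
inductive_cases typed_AssignE: "typed P PA pc (Assign x e)"
inductive_cases typed_AReadE: "typed P PA pc (ARead x a i)"
inductive_cases typed_AWriteE: "typed P PA pc (AWrite a i e)"

lemma istep_preserves_typed:
  "istep P c r m b ob d c' r' m' b' \<Longrightarrow> typed P PA True c \<Longrightarrow> typed P PA True c'"
proof (induction rule: istep.induct)
  case (iWhile P b c r m \<beta>)
  then show ?case
    by (auto elim!: typed_WhileE intro!: typed.intros simp: ljoin_def)
qed (auto elim!: typed_SeqE typed_IfE intro: typed.intros typed_lower_pc simp: lle_def ljoin_def)

inductive_cases istep_SKIPE: "istep P SKIP r m b ob d c' r' m' b'"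
inductive_cases istep_SeqE: "istep P (Seq c1 c2) r m b ob d c' r' m' b'"
inductive_cases istep_IfE: "istep P (If bb c1 c2) r m b ob d c' r' m' b'"
inductive_cases istep_WhileE: "istep P (While bb c) r m b ob d c' r' m' b'"
inductive_cases istep_AssignE: "istep P (Assign x e) r m b ob d c' r' m' b'"
inductive_cases istep_AReadE: "istep P (ARead x a ie) r m b ob d c' r' m' b'"
inductive_cases istep_AWriteE: "istep P (AWrite a ie e) r m b ob d c' r' m' b'"

(* The hypothesis on observations is needed only for unflagged steps, whose branch conditions and
   addresses may depend on secrets. *)
lemma istep_lockstep:
  "istep P c r1 m1 b ob1 d c1' r1' m1' b1' \<Longrightarrow> istep P c r2 m2 b ob2 d c2' r2' m2' b2' \<Longrightarrow>
   typed P PA True c \<Longrightarrow> sim_P P r1 r2 \<Longrightarrow> sim_PA PA m1 m2 \<Longrightarrow> b \<or> ob1 = ob2 \<Longrightarrow>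
   ob1 = ob2 \<and> c1' = c2' \<and> sim_P P r1' r2' \<and> sim_PA PA m1' m2'"
proof (induction arbitrary: r2 m2 ob2 c2' r2' m2' b2' rule: istep.induct)
  case (iSeq P c1 r m \<beta> o' d c1' r' m' \<beta>' c2)
  then show ?case by (auto elim!: istep_SeqE typed_SeqE elim: istep_SKIPE)
next
  case (iSkip P c r m \<beta>)
  then show ?case by (auto elim!: istep_SeqE elim: istep_SKIPE)
next
  case (iIfStep v P b \<beta> r c1 c2 m)
  then show ?case by (auto elim!: istep_IfE dest: bval_public)
next
  case (iIfForce v P b \<beta> r c1 c2 m)
  then show ?case by (auto elim!: istep_IfE dest: bval_public)
next
  case (iAssign P x e r m \<beta>)
  then show ?case using aval_public[OF _ iAssign.prems(3)]
    by (auto elim!: istep_AssignE typed_AssignE simp: sim_P_def lle_def ljoin_def)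
next
  case (iReadStep i P ie x \<beta> r m a)
  then show ?case
    by (auto elim!: istep_AReadE typed_AReadE dest: aval_public
        simp: sim_P_def sim_PA_def lle_def ljoin_def split: if_splits)
next
  case (iReadLoad \<beta> P ie x i r m a j a')
  then show ?case by (auto elim!: istep_AReadE dest: aval_public simp: sim_P_def)
next
  case (iWriteStep i P ie e \<beta> r m a)
  then show ?case using aval_public[OF _ iWriteStep.prems(3)]
    by (auto elim!: istep_AWriteE typed_AWriteE
        simp: sim_PA_def lle_def ljoin_def split: if_splits)
next
  case (iWriteStore \<beta> P ie e i r m a j a')
  then show ?case by (auto elim!: istep_AWriteE dest: aval_public simp: sim_PA_def)
qed (auto elim: istep_WhileE)

lemma istep_olist_dir_cancel:
  assumes "istep P c r1 m1 b1 ob1 d1 c1' r1' m1' b1'" and "istep P c r2 m2 b2 ob2 d2 c2' r2' m2' b2'"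
    and "olist d1 @ D1 = olist d2 @ D2"
  shows "d1 = d2 \<and> D1 = D2"
proof -
  have "d1 = None \<longleftrightarrow> d2 = None"
    using assms(1,2) by (simp add: istep_dir_None_iff_silent)
  with assms(3) show ?thesis by (cases d1; cases d2) (auto simp: olist_def)
qed

definition lockstep_inv ::
    "(vname \<Rightarrow> label) \<Rightarrow> (aname \<Rightarrow> label) \<Rightarrow> com \<Rightarrow> state \<Rightarrow> astate \<Rightarrow> state \<Rightarrow> astate \<Rightarrow> bool \<Rightarrow> bool" where
  "lockstep_inv P PA c r1 m1 r2 m2 b \<longleftrightarrow>
     typed P PA True c \<and> sim_P P r1 r2 \<and> sim_PA PA m1 m2 \<and> (\<not> b \<longrightarrow> seq_equiv c r1 m1 c r2 m2)"

lemma istep_lockstep_inv: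
  assumes st1: "istep P c r1 m1 b ob1 d c1' r1' m1' b1'"
    and st2: "istep P c r2 m2 b ob2 d c2' r2' m2' b2'"
    and inv: "lockstep_inv P PA c r1 m1 r2 m2 b"
  shows "ob1 = ob2 \<and> c1' = c2' \<and> b1' = b2' \<and> lockstep_inv P PA c1' r1' m1' r2' m2' b1'"
proof -
  have ty: "typed P PA True c" and low: "sim_P P r1 r2" "sim_PA PA m1 m2"
    using inv by (simp_all add: lockstep_inv_def)
  have flag: "b1' = b2'" "b1' \<longleftrightarrow> b \<or> d = Some DForce"
    using istep_flag[OF st1] istep_flag[OF st2] by simp_all
  have obs: "ob1 = ob2"
  proof (cases b)
    case True
    then show ?thesis using istep_lockstep[OF st1 st2 ty low] by blast
  next
    case False
    then obtain c1'' r1'' m1'' c2'' r2'' m2'' where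
      seq1: "sstep c r1 m1 ob1 c1'' r1'' m1''" and seq2: "sstep c r2 m2 ob2 c2'' r2'' m2''"
      using istep_unflagged_sstep_ex st1 st2 by (metis (full_types))
    have "ob1 = None \<longleftrightarrow> ob2 = None"
      using istep_obs_None_iff_dir_None[OF st1] istep_obs_None_iff_dir_None[OF st2] by simp
    moreover have "seq_equiv c r1 m1 c r2 m2"
      using False inv by (simp add: lockstep_inv_def)
    ultimately show ?thesis using seq_equiv_first_obs seq1 seq2 by blast
  qed
  have next_low: "c1' = c2'" "sim_P P r1' r2'" "sim_PA PA m1' m2'"
    using istep_lockstep[OF st1 st2 ty low] obs by simp_all
  have "seq_equiv c1' r1' m1' c1' r2' m2'" if "\<not> b1'"
  proof -
    have "\<not> b" "\<not> b2'" using that flag by simp_all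
    then have "sstep c r1 m1 ob1 c1' r1' m1'" "sstep c r2 m2 ob1 c1' r2' m2'"
      using istep_unflagged_sstep st1 st2 that obs next_low by simp_all
    with \<open>\<not> b\<close> inv show ?thesis by (auto simp: lockstep_inv_def intro: seq_equiv_sstep)
  qed
  with obs flag next_low istep_preserves_typed[OF st1 ty] show ?thesis
    by (simp add: lockstep_inv_def)
qed

lemma isteps_lockstep_obs_eq:
  "isteps P c r1 m1 b D O1 c1' r1' m1' b1' \<Longrightarrow> isteps P c r2 m2 b D O2 c2' r2' m2' b2' \<Longrightarrow>
   lockstep_inv P PA c r1 m1 r2 m2 b \<Longrightarrow> O1 = O2"
proof (induction arbitrary: r2 m2 O2 c2' r2' m2' b2' rule: isteps.induct)
  case (isRefl P c r m b)
  then show ?case using isteps_length_eq by fastforce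
next
  case (isStep P c r1 m1 b ob1 d c' r1' m1' b' D O1 c1'' r1'' m1'' b1'')
  note step1 = isStep.hyps(1) and IH = isStep.IH and inv = isStep.prems(2)
  from isStep.prems(1) show ?case
  proof (cases rule: isteps.cases)
    case isRefl
    then have "d = None" "D = []" by (auto simp: olist_def split: option.splits)
    with isStep.hyps isRefl show ?thesis
      by (auto simp: olist_def dest: istep_obs_None_iff_dir_None isteps_length_eq)
  next
    case (isStep ob2 d2 c2 r2' m2' b2' D2 O2')
    then have "d = d2" "D = D2"
      using istep_olist_dir_cancel[OF step1] by blast+
    with isStep istep_lockstep_inv[OF step1 _ inv]
    have "ob1 = ob2" "c2 = c'" "b2' = b'" "lockstep_inv P PA c' r1' m1' r2' m2' b'"
      by blast+
    with IH isStep \<open>D = D2\<close> show ?thesis by auto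
  qed
qed

theorem lemma5p4:
  assumes "typed P PA True c"
    and "sim_P P r1 r2"
    and "sim_PA PA m1 m2"
    and "seq_equiv c r1 m1 c r2 m2"
  shows "ideal_equiv P c r1 m1 False c r2 m2 False"
  using assms isteps_lockstep_obs_eq unfolding ideal_equiv_def lockstep_inv_def by blast

end
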